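(* Let $\rho\in\mathbb R$, let $\mathbf a=\{a_n\}_{n\ge1}$ be an admissible sequence of non-negative real numbers, and let $\kappa_{\mathbf a}(s,u)=\sum_{n\ge1}a_nn^{-s-\bar u}$ be the diagonal Dirichlet series kernel on $\mathbb H_\rho\times\mathbb H_\rho$ with reproducing kernel Hilbert space $\mathscr H_{\mathbf a}$; write $\kappa_{\mathbf a,u}=\kappa_{\mathbf a}(\cdot,u)$. Then for every real $\alpha>\rho$, the family $\{\kappa_{\mathbf a,\alpha+ib}:b\in\mathbb R\}$ is a linearly independent total subset of $\mathscr H_{\mathbf a}$.
   Context: $\mathbb H_\rho=\{\Re s>\rho\}$. The diagonal kernel $\kappa_{\mathbf a}$ is assumed convergent on $\mathbb H_\rho\times\mathbb H_\rho$; $\mathscr H_{\mathbf a}$ is the Hilbert space of functions on $\mathbb H_\rho$ with $\kappa_{\mathbf a}(\cdot,t)\in\mathscr H_{\mathbf a}$ and $\langle f,\kappa_{\mathbf a}(\cdot,t)\rangle=f(t)$. A real sequence $\mathbf a$ is admissible if $\mathrm{supp}(\mathbf a)=\{n:a_n\ne0\}$ is an infinite subset of $\mathbb N$ closed under multiplication and contains $p,q\ne1$ with $\gcd(p,q)=1$. Total: the closed linear span is the whole space. *)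

theory Defs
  imports "HOL-Analysis.Analysis"
begin

definition halfplane :: "real \<Rightarrow> complex set" where
  "halfplane \<rho> = {s. Re s > \<rho>}"

text \<open>Support of a sequence a = (a_n)_{n \<ge> 1}; the value a 0 is ignored.\<close>
definition supp_seq :: "(nat \<Rightarrow> real) \<Rightarrow> nat set" where
  "supp_seq a = {n. 1 \<le> n \<and> a n \<noteq> 0}"

definition admissible :: "(nat \<Rightarrow> real) \<Rightarrow> bool" where
  "admissible a \<longleftrightarrow> infinite (supp_seq a) \<and>
     (\<forall>m\<in>supp_seq a. \<forall>n\<in>supp_seq a. m * n \<in> supp_seq a) \<and>
     (\<exists>p\<in>supp_seq a. \<exists>q\<in>supp_seq a. p \<noteq> 1 \<and> q \<noteq> 1 \<and> coprime p q)"

definition dkernel :: "(nat \<Rightarrow> real) \<Rightarrow> complex \<Rightarrow> complex \<Rightarrow> complex" where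
  "dkernel a s u = (\<Sum>n. of_real (a (Suc n)) * of_nat (Suc n) powr (- (s + cnj u)))"

definition kernel_converges :: "real \<Rightarrow> (nat \<Rightarrow> real) \<Rightarrow> bool" where
  "kernel_converges \<rho> a \<longleftrightarrow> (\<forall>s\<in>halfplane \<rho>. \<forall>u\<in>halfplane \<rho>.
      summable (\<lambda>n. of_real (a (Suc n)) * of_nat (Suc n) powr (- (s + cnj u))))"

text \<open>Functions on H_rho are represented as functions complex => complex vanishing
  outside H_rho.  kappa_{a,u} = kappa_a(., u).\<close>
definition kfun :: "real \<Rightarrow> (nat \<Rightarrow> real) \<Rightarrow> complex \<Rightarrow> complex \<Rightarrow> complex" where
  "kfun \<rho> a u = (\<lambda>s. if s \<in> halfplane \<rho> then dkernel a s u else 0)"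

definition ip_norm :: "((complex \<Rightarrow> complex) \<Rightarrow> (complex \<Rightarrow> complex) \<Rightarrow> complex)
    \<Rightarrow> (complex \<Rightarrow> complex) \<Rightarrow> real" where
  "ip_norm ip f = sqrt (Re (ip f f))"

definition hilbert_fun_space :: "real \<Rightarrow> (complex \<Rightarrow> complex) set
    \<Rightarrow> ((complex \<Rightarrow> complex) \<Rightarrow> (complex \<Rightarrow> complex) \<Rightarrow> complex) \<Rightarrow> bool" where
  "hilbert_fun_space \<rho> H ip \<longleftrightarrow>
     (\<forall>f\<in>H. \<forall>s. s \<notin> halfplane \<rho> \<longrightarrow> f s = 0) \<and>
     (\<lambda>_. 0) \<in> H \<and>
     (\<forall>f\<in>H. \<forall>g\<in>H. (\<lambda>s. f s + g s) \<in> H) \<and>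
     (\<forall>f\<in>H. \<forall>c. (\<lambda>s. c * f s) \<in> H) \<and>
     (\<forall>f\<in>H. \<forall>g\<in>H. \<forall>h\<in>H. ip (\<lambda>s. f s + g s) h = ip f h + ip g h) \<and>
     (\<forall>f\<in>H. \<forall>g\<in>H. \<forall>c. ip (\<lambda>s. c * f s) g = c * ip f g) \<and>
     (\<forall>f\<in>H. \<forall>g\<in>H. ip g f = cnj (ip f g)) \<and>
     (\<forall>f\<in>H. Im (ip f f) = 0 \<and> Re (ip f f) \<ge> 0) \<and>
     (\<forall>f\<in>H. ip f f = 0 \<longrightarrow> f = (\<lambda>_. 0)) \<and>
     (\<forall>F. (\<forall>n. F n \<in> H) \<longrightarrow>
          (\<forall>e>0. \<exists>N. \<forall>m\<ge>N. \<forall>n\<ge>N. ip_norm ip (\<lambda>s. F m s - F n s) < e) \<longrightarrow>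
          (\<exists>f\<in>H. (\<lambda>n. ip_norm ip (\<lambda>s. F n s - f s)) \<longlonglongrightarrow> 0))"

definition is_rkhs :: "real \<Rightarrow> (nat \<Rightarrow> real) \<Rightarrow> (complex \<Rightarrow> complex) set
    \<Rightarrow> ((complex \<Rightarrow> complex) \<Rightarrow> (complex \<Rightarrow> complex) \<Rightarrow> complex) \<Rightarrow> bool" where
  "is_rkhs \<rho> a H ip \<longleftrightarrow> hilbert_fun_space \<rho> H ip \<and>
     (\<forall>t\<in>halfplane \<rho>. kfun \<rho> a t \<in> H \<and> (\<forall>f\<in>H. ip f (kfun \<rho> a t) = f t))"

end

(*
  Linear independence: at real points s, a vanishing combination
  sum_b c_b kappa(s, alpha + i b) is a Dirichlet series sum_n a_n P(n) n^(-s - alpha)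
  with P(n) = sum_b c_b n^(i b), so uniqueness of Dirichlet coefficients gives P(n) = 0
  on the support of a.  For coprime p, q in the multiplicatively closed support,
  P(p^j q^k) = 0 for all j, k >= 1 is a vanishing double power sum in the pairs
  (p^(i b), q^(i b)); these pairs are distinct because log p / log q is irrational,
  so all c_b vanish.

  Totality: by the projection theorem every f in H is a limit of combinations of the
  kernels kappa(., alpha + i b) plus a function h orthogonal to all of them, i.e.
  vanishing on the line Re s = alpha by the reproducing property.  Point evaluations
  are locally uniformly bounded (Cauchy-Schwarz), so norm limits are locally uniform
  limits; hence H consists of holomorphic functions and h = 0 by the identity theorem.
*)

theory Submission
  imports Defs "HOL-Complex_Analysis.Complex_Analysis"
begin

section \<open>Dirichlet series and linear independence\<close>

lemma of_nat_powr_eq_exp: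
  "n > 0 \<Longrightarrow> (of_nat n :: complex) powr z = exp (z * of_real (ln (real n)))"
  by (simp add: powr_def)

lemma of_nat_powr_of_real: "(of_nat n :: complex) powr of_real x = of_real (real n powr x)"
  using powr_of_real[of "real n" x] by simp

lemma of_nat_prod_powers_powr:
  assumes "p > 0" "q > 0"
  shows "(of_nat (p ^ j * q ^ k) :: complex) powr z = (of_nat p powr z) ^ j * (of_nat q powr z) ^ k"
proof -
  have "ln (real (p ^ j * q ^ k)) = real j * ln (real p) + real k * ln (real q)"
    using assms by (simp add: ln_mult ln_realpow)
  then have "(of_nat (p ^ j * q ^ k) :: complex) powr z
      = exp (of_nat j * (z * of_real (ln (real p))) + of_nat k * (z * of_real (ln (real q))))"
    using assms by (subst of_nat_powr_eq_exp) (simp_all add: algebra_simps)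
  also have "\<dots> = (of_nat p powr z) ^ j * (of_nat q powr z) ^ k"
    using assms by (simp add: of_nat_powr_eq_exp exp_add exp_of_nat_mult)
  finally show ?thesis .
qed

lemma power_sums_shift:
  fixes x y d :: "'i \<Rightarrow> 'a :: comm_ring_1"
  assumes "\<forall>j k. (\<Sum>b\<in>B. d b * x b ^ j * y b ^ k) = 0"
  shows "(\<Sum>b\<in>B. d b * (x b - z) * x b ^ j * y b ^ k) = 0"
proof -
  have "(\<Sum>b\<in>B. d b * (x b - z) * x b ^ j * y b ^ k)
      = (\<Sum>b\<in>B. d b * x b ^ Suc j * y b ^ k) - z * (\<Sum>b\<in>B. d b * x b ^ j * y b ^ k)"
    by (simp add: sum_subtractf sum_distrib_left algebra_simps)
  then show ?thesis using assms[rule_format, of "Suc j" k] assms[rule_format, of j k] by simp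
qed

lemma power_sums_eq_zero_imp_coeffs_zero:
  fixes x y d :: "'i \<Rightarrow> 'a :: idom"
  assumes "finite B" "inj_on (\<lambda>b. (x b, y b)) B"
    and "\<forall>j k. (\<Sum>b\<in>B. d b * x b ^ j * y b ^ k) = 0"
  shows "\<forall>b\<in>B. d b = 0"
  using assms
proof (induction B arbitrary: d rule: finite_induct)
  case empty
  then show ?case by simp
next
  case (insert b0 B)
  have inj: "inj_on (\<lambda>b. (x b, y b)) B"
    using insert.prems(1) by (simp add: inj_on_insert)
  have sums: "\<forall>j k. (\<Sum>b\<in>insert b0 B. d b * x b ^ j * y b ^ k) = 0"
    using insert.prems(2) .
  \<comment> \<open>Multiplying by x b - x b0, resp. y b - y b0, kills the b0 term.\<close>
  have "\<forall>b\<in>B. d b * (x b - x b0) = 0"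
  proof (rule insert.IH[OF inj], intro allI)
    fix j k
    show "(\<Sum>b\<in>B. d b * (x b - x b0) * x b ^ j * y b ^ k) = 0"
      using power_sums_shift[OF sums, of "x b0" j k] insert.hyps by simp
  qed
  moreover have "\<forall>b\<in>B. d b * (y b - y b0) = 0"
  proof (rule insert.IH[OF inj], intro allI)
    fix j k
    have "\<forall>j k. (\<Sum>b\<in>insert b0 B. d b * y b ^ j * x b ^ k) = 0"
      using sums by (simp add: mult_ac)
    from power_sums_shift[OF this, of "y b0" k j] insert.hyps
    show "(\<Sum>b\<in>B. d b * (y b - y b0) * x b ^ j * y b ^ k) = 0"
      by (simp add: mult_ac)
  qed
  moreover have "(x b, y b) \<noteq> (x b0, y b0)" if "b \<in> B" for b
    using insert.prems(1) insert.hyps(2) that by (auto simp: inj_on_def)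
  ultimately have "\<forall>b\<in>B. d b = 0" by auto
  moreover have "d b0 = 0"
    using sums[rule_format, of 0 0] calculation insert.hyps by simp
  ultimately show ?case by simp
qed

lemma dirichlet_abs_summable_mono:
  fixes d :: "nat \<Rightarrow> complex"
  assumes "summable (\<lambda>n. norm (d (Suc n)) * real (Suc n) powr -y)" "y \<le> x"
  shows "summable (\<lambda>n. norm (d (Suc n)) * real (Suc n) powr -x)"
  using assms(1) by (rule summable_comparison_test'[of _ 0])
    (use assms(2) in \<open>auto intro!: mult_left_mono powr_mono\<close>)

lemma dirichlet_series_leading_coeff_bound:
  fixes d :: "nat \<Rightarrow> complex"
  assumes summable: "summable (\<lambda>n. norm (d (Suc n)) * real (Suc n) powr -y)"
    and "y \<le> x"
    and zero: "(\<Sum>n. d (Suc n) * of_real (real (Suc n) powr -x)) = 0"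
    and below: "\<And>k. 1 \<le> k \<Longrightarrow> k < m \<Longrightarrow> d k = 0" and "m \<ge> 1"
  shows "norm (d m) * real m powr -x
    \<le> (\<Sum>n. norm (d (Suc (n + m))) * real (Suc (n + m)) powr -y) * real (Suc m) powr (y - x)"
proof -
  define f where "f n = d (Suc n) * of_real (real (Suc n) powr -x)" for n
  define g where "g n = norm (d (Suc n)) * real (Suc n) powr -y" for n
  have powr_le: "real (Suc n) powr -x \<le> real (Suc n) powr -y * real (Suc m) powr (y - x)"
    if "n \<ge> m" for n
  proof -
    have "real (Suc n) powr -x = real (Suc n) powr -y * real (Suc n) powr (y - x)"
      by (simp flip: powr_add)
    also have "\<dots> \<le> real (Suc n) powr -y * real (Suc m) powr (y - x)"
      using that \<open>y \<le> x\<close> by (intro mult_left_mono powr_mono2') auto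
    finally show ?thesis .
  qed
  have norm_f: "norm (f n) = norm (d (Suc n)) * real (Suc n) powr -x" for n
    by (simp add: f_def norm_mult)
  have "summable (\<lambda>n. norm (f n))"
    using dirichlet_abs_summable_mono[OF summable \<open>y \<le> x\<close>] by (simp add: norm_f)
  then have tail_summable: "summable (\<lambda>n. norm (f (n + m)))" and "summable f"
    by (auto intro: summable_ignore_initial_segment summable_norm_cancel)
  have g_tail_summable: "summable (\<lambda>n. g (n + m))"
    using summable_ignore_initial_segment[OF summable, of m] by (simp add: g_def)
  have "sum f {..<m} = f (m - 1)"
    using \<open>m \<ge> 1\<close> below by (cases m) (auto simp: f_def intro!: sum.neutral)
  moreover have "suminf f = 0"
    using zero unfolding f_def .
  ultimately have "f (m - 1) = - (\<Sum>n. f (n + m))"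
    using suminf_split_initial_segment[OF \<open>summable f\<close>, of m]
    by (simp add: eq_neg_iff_add_eq_0 add.commute)
  moreover have "norm (d m) * real m powr -x = norm (f (m - 1))"
    using \<open>m \<ge> 1\<close> by (simp add: norm_f)
  ultimately have "norm (d m) * real m powr -x = norm (\<Sum>n. f (n + m))"
    by simp
  also have "\<dots> \<le> (\<Sum>n. norm (f (n + m)))"
    by (rule summable_norm[OF tail_summable])
  also have "\<dots> \<le> (\<Sum>n. g (n + m) * real (Suc m) powr (y - x))"
  proof (rule suminf_le)
    fix n
    show "norm (f (n + m)) \<le> g (n + m) * real (Suc m) powr (y - x)"
      using powr_le[of "n + m"] by (simp add: norm_f g_def mult.assoc mult_left_mono)
  qed (fact tail_summable, rule summable_mult2[OF g_tail_summable])
  also have "\<dots> = (\<Sum>n. g (n + m)) * real (Suc m) powr (y - x)"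
    by (rule suminf_mult2[symmetric, OF g_tail_summable])
  finally show ?thesis by (simp add: g_def)
qed

lemma dirichlet_series_coeffs_eq_zero:
  fixes d :: "nat \<Rightarrow> complex"
  assumes summable: "\<And>x. x > x0 \<Longrightarrow> summable (\<lambda>n. norm (d (Suc n)) * real (Suc n) powr -x)"
    and zero: "\<And>x. x > x0 \<Longrightarrow> (\<Sum>n. d (Suc n) * of_real (real (Suc n) powr -x)) = 0"
  shows "m \<ge> 1 \<Longrightarrow> d m = 0"
proof (induction m rule: less_induct)
  case (less m)
  define y where "y = x0 + 1"
  define T where "T = (\<Sum>n. norm (d (Suc (n + m))) * real (Suc (n + m)) powr -y)"
  define r where "r = real m / real (Suc m)"
  have bound: "norm (d m) \<le> T * real m powr y * r ^ k" for k
  proof -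
    have "summable (\<lambda>n. norm (d (Suc n)) * real (Suc n) powr -y)"
      by (rule summable) (simp add: y_def)
    moreover have "(\<Sum>n. d (Suc n) * of_real (real (Suc n) powr -(y + k))) = 0"
      by (rule zero) (simp add: y_def)
    ultimately have "norm (d m) * real m powr -(y + k) \<le> T * real (Suc m) powr (y - (y + k))"
      (is ?bound)
      unfolding T_def using less by (intro dirichlet_series_leading_coeff_bound) auto
    have "norm (d m) = norm (d m) * real m powr -(y + k) * real m powr (y + k)"
      using less.prems by (simp add: mult.assoc flip: powr_add)
    also have "\<dots> \<le> T * real (Suc m) powr (y - (y + k)) * real m powr (y + k)"
      by (rule mult_right_mono[OF \<open>?bound\<close>]) simp
    also have "\<dots> = T * real m powr y * r ^ k"
      using less.prems
      by (simp add: r_def powr_add powr_minus powr_realpow power_divide field_simps)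
    finally show ?thesis .
  qed
  have "(\<lambda>k. T * real m powr y * r ^ k) \<longlonglongrightarrow> T * real m powr y * 0"
    by (intro tendsto_intros LIMSEQ_power_zero) (simp add: r_def)
  then have "norm (d m) \<le> 0"
    using bound by (intro tendsto_lowerbound[of _ _ sequentially]) (auto intro: always_eventually)
  then show ?case by simp
qed

lemma ln_coprime_commensurable_imp_zero:
  fixes p q :: nat and i j :: int
  assumes "p \<ge> 2" "q \<ge> 2" "coprime p q"
    and "of_int i * ln (real p) = of_int j * ln (real q)"
  shows "i = 0"
proof -
  have "ln (real p) > 0" "ln (real q) > 0"
    using assms(1,2) by simp_all
  then have "\<bar>of_int i\<bar> * ln (real p) = \<bar>of_int j\<bar> * ln (real q)"
    using arg_cong[OF assms(4), of abs] by (simp add: abs_mult)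
  then have "real (nat \<bar>i\<bar>) * ln (real p) = real (nat \<bar>j\<bar>) * ln (real q)"
    by simp
  then have "ln (real (p ^ nat \<bar>i\<bar>)) = ln (real (q ^ nat \<bar>j\<bar>))"
    using assms(1,2) by (simp add: ln_realpow)
  then have "real (p ^ nat \<bar>i\<bar>) = real (q ^ nat \<bar>j\<bar>)"
    using assms(1,2) by (subst (asm) ln_inj_iff) auto
  then have "p ^ nat \<bar>i\<bar> = q ^ nat \<bar>j\<bar>"
    by (rule of_nat_eq_iff[THEN iffD1])
  moreover have "coprime (p ^ nat \<bar>i\<bar>) (q ^ nat \<bar>j\<bar>)"
    using assms(3) by simp
  ultimately have "p ^ nat \<bar>i\<bar> = 1"
    by simp
  then show ?thesis
    using assms(1) by simp
qed

lemma inj_imag_powers_coprime: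
  assumes "p \<ge> 2" "q \<ge> 2" "coprime p q"
  shows "inj (\<lambda>b. ((of_nat p :: complex) powr (\<i> * of_real b),
                     (of_nat q :: complex) powr (\<i> * of_real b)))"
proof (rule injI)
  fix b b' :: real
  assume eq: "(of_nat p powr (\<i> * of_real b), of_nat q powr (\<i> * of_real b))
            = ((of_nat p :: complex) powr (\<i> * of_real b'),
               (of_nat q :: complex) powr (\<i> * of_real b'))"
  have period: "\<exists>i::int. (b - b') * ln (real n) = 2 * pi * of_int i"
    if "n > 0" "(of_nat n :: complex) powr (\<i> * of_real b) = of_nat n powr (\<i> * of_real b')" for n
  proof -
    have "exp (\<i> * of_real b * of_real (ln (real n)))
        = exp (\<i> * of_real b' * of_real (ln (real n)))"
      using that by (simp add: of_nat_powr_eq_exp)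
    then obtain i :: int where "\<i> * of_real b * of_real (ln (real n))
        = \<i> * of_real b' * of_real (ln (real n)) + of_real (of_int (2 * i) * pi) * \<i>"
      unfolding exp_eq by blast
    then have "(b - b') * ln (real n) = 2 * pi * of_int i"
      by (auto simp: complex_eq_iff algebra_simps)
    then show ?thesis ..
  qed
  obtain i j :: int where i: "(b - b') * ln (real p) = 2 * pi * of_int i"
    and j: "(b - b') * ln (real q) = 2 * pi * of_int j"
    using period[of p] period[of q] eq assms(1,2) by auto
  have "2 * pi * (of_int j * ln (real p)) = 2 * pi * (of_int i * ln (real q))"
    by (metis i j mult.assoc mult.commute)
  then have "j = 0"
    by (intro ln_coprime_commensurable_imp_zero[OF assms, of j i]) simp
  then show "b = b'"
    using j assms(2) by simp
qed

lemma power_mem_mult_closed: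
  fixes S :: "nat set"
  assumes "p \<in> S" "\<forall>m\<in>S. \<forall>n\<in>S. m * n \<in> S"
  shows "p ^ Suc j \<in> S"
  using assms by (induction j) auto

definition imag_power_sum :: "real set \<Rightarrow> (real \<Rightarrow> complex) \<Rightarrow> nat \<Rightarrow> complex" where
  "imag_power_sum B c n = (\<Sum>b\<in>B. c b * of_nat n powr (\<i> * of_real b))"

lemma imag_power_sum_eq_zero_imp_coeffs_zero:
  assumes "finite B" "p \<ge> 2" "q \<ge> 2" "coprime p q"
    and zero: "\<And>j k. imag_power_sum B c (p ^ Suc j * q ^ Suc k) = 0"
  shows "\<forall>b\<in>B. c b = 0"
proof -
  define x where "x b = (of_nat p :: complex) powr (\<i> * of_real b)" for b
  define y where "y b = (of_nat q :: complex) powr (\<i> * of_real b)" for b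
  have "\<forall>b\<in>B. c b * x b * y b = 0"
  proof (rule power_sums_eq_zero_imp_coeffs_zero[OF assms(1)])
    show "inj_on (\<lambda>b. (x b, y b)) B"
      using inj_imag_powers_coprime[OF assms(2-4)] unfolding x_def y_def
      by (rule inj_on_subset) simp
    have "imag_power_sum B c (p ^ Suc j * q ^ Suc k) = (\<Sum>b\<in>B. c b * x b * y b * x b ^ j * y b ^ k)"
      for j k
      using assms(2,3) unfolding imag_power_sum_def
      by (simp only: of_nat_prod_powers_powr) (simp add: x_def y_def mult_ac)
    then show "\<forall>j k. (\<Sum>b\<in>B. c b * x b * y b * x b ^ j * y b ^ k) = 0"
      using zero by simp
  qed
  moreover have "x b \<noteq> 0" "y b \<noteq> 0" for b
    using assms(2,3) by (simp_all add: x_def y_def of_nat_powr_eq_exp)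
  ultimately show ?thesis by simp
qed

lemma of_nat_powr_kernel_exponent:
  "(of_nat n :: complex) powr -(s + cnj u)
     = of_real (real n powr -(Re s + Re u)) * of_nat n powr (\<i> * of_real (Im u - Im s))"
proof -
  have "-(s + cnj u) = of_real (-(Re s + Re u)) + \<i> * of_real (Im u - Im s)"
    by (simp add: complex_eq_iff)
  then show ?thesis
    by (simp only: powr_add of_nat_powr_of_real)
qed

lemma norm_of_nat_powr_imag [simp]: "n > 0 \<Longrightarrow> norm ((of_nat n :: complex) powr (\<i> * of_real b)) = 1"
  by (simp add: of_nat_powr_eq_exp)

lemma norm_of_nat_powr_kernel_exponent:
  "n > 0 \<Longrightarrow> norm ((of_nat n :: complex) powr -(s + cnj u)) = real n powr -(Re s + Re u)"
  by (simp only: of_nat_powr_kernel_exponent norm_mult norm_of_nat_powr_imag) simp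

lemma kernel_real_summable:
  assumes conv: "kernel_converges \<rho> a" and "\<sigma> > \<rho>" "\<tau> > \<rho>"
  shows "summable (\<lambda>n. a (Suc n) * real (Suc n) powr -(\<sigma> + \<tau>))"
proof -
  have "of_real \<sigma> \<in> halfplane \<rho>" "of_real \<tau> \<in> halfplane \<rho>"
    using assms(2,3) by (simp_all add: halfplane_def)
  then have "summable (\<lambda>n. of_real (a (Suc n))
      * of_nat (Suc n) powr -(of_real \<sigma> + cnj (of_real \<tau>)))"
    using conv unfolding kernel_converges_def by blast
  moreover have "of_real (a (Suc n)) * of_nat (Suc n) powr -(of_real \<sigma> + cnj (of_real \<tau>))
      = (of_real (a (Suc n) * real (Suc n) powr -(\<sigma> + \<tau>)) :: complex)" for n
    by (subst of_nat_powr_kernel_exponent) (simp del: of_nat_Suc)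
  ultimately show ?thesis
    by (simp only: summable_of_real_iff)
qed

lemma norm_imag_power_sum_le:
  "n > 0 \<Longrightarrow> norm (imag_power_sum B c n) \<le> (\<Sum>b\<in>B. norm (c b))"
  unfolding imag_power_sum_def
  by (rule order.trans[OF norm_sum]) (simp add: norm_mult)

lemma kernel_combination_at_real:
  assumes conv: "kernel_converges \<rho> a" and "\<alpha> > \<rho>" "x > \<rho> + \<alpha>"
  shows "(\<Sum>b\<in>B. c b * kfun \<rho> a (Complex \<alpha> b) (of_real (x - \<alpha>)))
       = (\<Sum>n. (of_real (a (Suc n)) * imag_power_sum B c (Suc n)) * of_real (real (Suc n) powr -x))"
proof -
  define s :: complex where "s = of_real (x - \<alpha>)"
  define t where
    "t b n = c b * (of_real (a (Suc n)) * of_nat (Suc n) powr -(s + cnj (Complex \<alpha> b)))"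
    for b n
  have s: "s \<in> halfplane \<rho>" and u: "Complex \<alpha> b \<in> halfplane \<rho>" for b
    using assms(2,3) by (simp_all add: s_def halfplane_def)
  have kernel_summable:
    "summable (\<lambda>n. of_real (a (Suc n)) * of_nat (Suc n) powr -(s + cnj (Complex \<alpha> b)))" for b
    using conv s u unfolding kernel_converges_def by blast
  have summable: "summable (t b)" for b
    unfolding t_def by (rule summable_mult[OF kernel_summable])
  have "(\<Sum>b\<in>B. c b * kfun \<rho> a (Complex \<alpha> b) s) = (\<Sum>b\<in>B. \<Sum>n. t b n)"
    unfolding kfun_def dkernel_def t_def if_P[OF s] by (simp only: suminf_mult[OF kernel_summable])
  also have "\<dots> = (\<Sum>n. \<Sum>b\<in>B. t b n)"
    by (rule suminf_sum[symmetric, OF summable])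
  also have "(\<lambda>n. \<Sum>b\<in>B. t b n)
      = (\<lambda>n. (of_real (a (Suc n)) * imag_power_sum B c (Suc n)) * of_real (real (Suc n) powr -x))"
  proof
    fix n
    have "of_nat (Suc n) powr -(s + cnj (Complex \<alpha> b))
        = of_real (real (Suc n) powr -x) * of_nat (Suc n) powr (\<i> * of_real b)" for b
      by (simp only: of_nat_powr_kernel_exponent) (simp add: s_def)
    then show "(\<Sum>b\<in>B. t b n)
        = (of_real (a (Suc n)) * imag_power_sum B c (Suc n)) * of_real (real (Suc n) powr -x)"
      by (simp add: t_def imag_power_sum_def sum_distrib_left sum_distrib_right mult_ac)
  qed
  finally show ?thesis by (simp add: s_def)
qed

lemma kernel_combination_zero_imp_imag_power_sum_zero:
  assumes nonneg: "\<forall>n\<ge>1. a n \<ge> 0" and conv: "kernel_converges \<rho> a" and "\<alpha> > \<rho>"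
    and zero: "(\<lambda>s. \<Sum>b\<in>B. c b * kfun \<rho> a (Complex \<alpha> b) s) = (\<lambda>_. 0)"
    and m: "m \<in> supp_seq a"
  shows "imag_power_sum B c m = 0"
proof -
  define d where "d n = of_real (a n) * imag_power_sum B c n" for n
  define C where "C = (\<Sum>b\<in>B. norm (c b))"
  have "d m = 0"
  proof (rule dirichlet_series_coeffs_eq_zero[of "\<rho> + \<alpha>"])
    fix x assume x: "x > \<rho> + \<alpha>"
    show "summable (\<lambda>n. norm (d (Suc n)) * real (Suc n) powr -x)"
    proof (rule summable_comparison_test'[of "\<lambda>n. C * (a (Suc n) * real (Suc n) powr -x)" 0])
      show "summable (\<lambda>n. C * (a (Suc n) * real (Suc n) powr -x))"
        using kernel_real_summable[OF conv, of "x - \<alpha>" \<alpha>] x \<open>\<alpha> > \<rho>\<close> by (intro summable_mult) simp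
      fix n
      have "norm (d (Suc n)) \<le> a (Suc n) * C"
        using nonneg norm_imag_power_sum_le[of "Suc n" B c]
        by (simp add: d_def C_def norm_mult mult_left_mono)
      then show "norm (norm (d (Suc n)) * real (Suc n) powr -x)
          \<le> C * (a (Suc n) * real (Suc n) powr -x)"
        by (simp add: mult_right_mono mult_ac)
    qed
    show "(\<Sum>n. d (Suc n) * of_real (real (Suc n) powr -x)) = 0"
      using kernel_combination_at_real[OF conv \<open>\<alpha> > \<rho>\<close> x, of c B] fun_cong[OF zero]
      by (simp add: d_def)
  qed (use m in \<open>simp add: supp_seq_def\<close>)
  then show ?thesis
    using m by (simp add: d_def supp_seq_def)
qed

lemma kernels_on_vertical_line_linearly_independent:
  assumes nonneg: "\<forall>n\<ge>1. a n \<ge> 0" and adm: "admissible a" and conv: "kernel_converges \<rho> a"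
    and "\<alpha> > \<rho>" and "finite B"
    and zero: "(\<lambda>s. \<Sum>b\<in>B. c b * kfun \<rho> a (Complex \<alpha> b) s) = (\<lambda>_. 0)"
  shows "\<forall>b\<in>B. c b = 0"
proof -
  obtain p q where pq: "p \<in> supp_seq a" "q \<in> supp_seq a" "p \<noteq> 1" "q \<noteq> 1" "coprime p q"
    and mult_closed: "\<forall>m\<in>supp_seq a. \<forall>n\<in>supp_seq a. m * n \<in> supp_seq a"
    using adm unfolding admissible_def by blast
  have "p \<ge> 2" "q \<ge> 2"
    using pq by (auto simp: supp_seq_def)
  moreover have "imag_power_sum B c (p ^ Suc j * q ^ Suc k) = 0" for j k
  proof (rule kernel_combination_zero_imp_imag_power_sum_zero[OF nonneg conv \<open>\<alpha> > \<rho>\<close> zero])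
    show "p ^ Suc j * q ^ Suc k \<in> supp_seq a"
      using mult_closed power_mem_mult_closed[OF pq(1) mult_closed]
        power_mem_mult_closed[OF pq(2) mult_closed] by blast
  qed
  ultimately show ?thesis
    using imag_power_sum_eq_zero_imp_coeffs_zero[OF \<open>finite B\<close> _ _ pq(5)] by blast
qed

section \<open>Hilbert spaces of functions on a half-plane\<close>

lemma le_if_le_add_tendsto_0:
  fixes x y :: real
  assumes "\<And>n. x \<le> y + r n" "r \<longlonglongrightarrow> 0"
  shows "x \<le> y"
  using tendsto_add[OF tendsto_const assms(2), of y] assms(1) by (auto intro: LIMSEQ_le_const)

definition fun_span :: "('i \<Rightarrow> complex \<Rightarrow> complex) \<Rightarrow> 'i set \<Rightarrow> (complex \<Rightarrow> complex) set" where
  "fun_span K I = {(\<lambda>s. \<Sum>i\<in>B. c i * K i s) | B c. finite B \<and> B \<subseteq> I}"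

lemma fun_span_sum_mem: "finite B \<Longrightarrow> B \<subseteq> I \<Longrightarrow> (\<lambda>s. \<Sum>i\<in>B. c i * K i s) \<in> fun_span K I"
  unfolding fun_span_def by blast

lemma fun_span_generator: "i \<in> I \<Longrightarrow> K i \<in> fun_span K I"
  using fun_span_sum_mem[of "{i}" I "\<lambda>_. 1" K] by simp

lemma fun_span_combination:
  assumes "u \<in> fun_span K I" "w \<in> fun_span K I"
  shows "(\<lambda>s. x * u s + y * w s) \<in> fun_span K I"
proof -
  obtain B1 c1 where u: "u = (\<lambda>s. \<Sum>i\<in>B1. c1 i * K i s)" "finite B1" "B1 \<subseteq> I"
    using assms(1) unfolding fun_span_def by blast
  obtain B2 c2 where w: "w = (\<lambda>s. \<Sum>i\<in>B2. c2 i * K i s)" "finite B2" "B2 \<subseteq> I"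
    using assms(2) unfolding fun_span_def by blast
  have extend: "(\<Sum>i\<in>B. c i * K i s) = (\<Sum>i\<in>B1 \<union> B2. (if i \<in> B then c i else 0) * K i s)"
    if "B \<subseteq> B1 \<union> B2" for B c s
  proof -
    have "(\<Sum>i\<in>B1 \<union> B2. (if i \<in> B then c i else 0) * K i s)
        = (\<Sum>i\<in>B1 \<union> B2. if i \<in> B then c i * K i s else 0)"
      by (rule sum.cong) auto
    also have "\<dots> = (\<Sum>i\<in>(B1 \<union> B2) \<inter> B. c i * K i s)"
      using u(2) w(2) by (simp add: sum.inter_restrict)
    finally show ?thesis
      using that by (simp add: Int_absorb1)
  qed
  have "(\<lambda>s. x * u s + y * w s)
      = (\<lambda>s. \<Sum>i\<in>B1 \<union> B2.
           (x * (if i \<in> B1 then c1 i else 0) + y * (if i \<in> B2 then c2 i else 0)) * K i s)"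
    unfolding u(1) w(1) extend[OF Un_upper1] extend[OF Un_upper2]
    by (simp add: sum_distrib_left sum.distrib algebra_simps)
  then show ?thesis
    using u w by (simp add: fun_span_sum_mem)
qed

locale hilbert_fun =
  fixes \<rho> :: real and H :: "(complex \<Rightarrow> complex) set"
    and ip :: "(complex \<Rightarrow> complex) \<Rightarrow> (complex \<Rightarrow> complex) \<Rightarrow> complex"
  assumes hilbert_fun_space: "hilbert_fun_space \<rho> H ip"
begin

lemma zero_mem: "(\<lambda>_. 0) \<in> H"
  and add_mem: "f \<in> H \<Longrightarrow> g \<in> H \<Longrightarrow> (\<lambda>s. f s + g s) \<in> H"
  and scale_mem: "f \<in> H \<Longrightarrow> (\<lambda>s. c * f s) \<in> H"
  and vanishes_outside: "f \<in> H \<Longrightarrow> s \<notin> halfplane \<rho> \<Longrightarrow> f s = 0"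
  and ip_add_left: "f \<in> H \<Longrightarrow> g \<in> H \<Longrightarrow> h \<in> H \<Longrightarrow> ip (\<lambda>s. f s + g s) h = ip f h + ip g h"
  and ip_scale_left: "f \<in> H \<Longrightarrow> g \<in> H \<Longrightarrow> ip (\<lambda>s. c * f s) g = c * ip f g"
  and ip_cnj_commute: "f \<in> H \<Longrightarrow> g \<in> H \<Longrightarrow> ip g f = cnj (ip f g)"
  and Im_ip_self: "f \<in> H \<Longrightarrow> Im (ip f f) = 0"
  and Re_ip_self_nonneg: "f \<in> H \<Longrightarrow> Re (ip f f) \<ge> 0"
  and ip_self_eq_0D: "f \<in> H \<Longrightarrow> ip f f = 0 \<Longrightarrow> f = (\<lambda>_. 0)"
  and complete: "(\<And>n. F n \<in> H) \<Longrightarrow>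
      \<forall>e>0. \<exists>N. \<forall>m\<ge>N. \<forall>n\<ge>N. ip_norm ip (\<lambda>s. F m s - F n s) < e \<Longrightarrow>
      \<exists>f\<in>H. (\<lambda>n. ip_norm ip (\<lambda>s. F n s - f s)) \<longlonglongrightarrow> 0"
  using hilbert_fun_space unfolding hilbert_fun_space_def by blast+

lemma combination_mem: "f \<in> H \<Longrightarrow> g \<in> H \<Longrightarrow> (\<lambda>s. f s + t * g s) \<in> H"
  by (intro add_mem scale_mem)

lemma diff_mem: "f \<in> H \<Longrightarrow> g \<in> H \<Longrightarrow> (\<lambda>s. f s - g s) \<in> H"
  using combination_mem[of f g "-1"] by simp

lemma ip_add_right: "f \<in> H \<Longrightarrow> g \<in> H \<Longrightarrow> h \<in> H \<Longrightarrow> ip h (\<lambda>s. f s + g s) = ip h f + ip h g"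
  using ip_cnj_commute[of "\<lambda>s. f s + g s" h] ip_cnj_commute[of f h] ip_cnj_commute[of g h]
  by (simp add: add_mem ip_add_left)

lemma ip_scale_right: "f \<in> H \<Longrightarrow> g \<in> H \<Longrightarrow> ip f (\<lambda>s. c * g s) = cnj c * ip f g"
  using ip_cnj_commute[of "\<lambda>s. c * g s" f] ip_cnj_commute[of g f]
  by (simp add: scale_mem ip_scale_left)

lemma ip_zero_left: "f \<in> H \<Longrightarrow> ip (\<lambda>_. 0) f = 0"
  using ip_scale_left[OF zero_mem, of f 0] by simp

lemma ip_zero_right: "f \<in> H \<Longrightarrow> ip f (\<lambda>_. 0) = 0"
  using ip_scale_right[OF _ zero_mem, of f 0] by simp

lemma ip_self_of_real: "f \<in> H \<Longrightarrow> ip f f = of_real (ip_norm ip f ^ 2)"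
  using Im_ip_self[of f] Re_ip_self_nonneg[of f] by (simp add: ip_norm_def complex_eq_iff)

lemma ip_norm_nonneg: "f \<in> H \<Longrightarrow> ip_norm ip f \<ge> 0"
  using Re_ip_self_nonneg by (simp add: ip_norm_def)

lemma ip_norm_eq_0_iff: "f \<in> H \<Longrightarrow> ip_norm ip f = 0 \<longleftrightarrow> f = (\<lambda>_. 0)"
proof
  assume "f \<in> H" "ip_norm ip f = 0"
  then show "f = (\<lambda>_. 0)"
    using ip_self_of_real ip_self_eq_0D by simp
next
  assume "f = (\<lambda>_. 0)"
  then show "ip_norm ip f = 0"
    using ip_zero_left[OF zero_mem] by (simp add: ip_norm_def)
qed

lemma ip_norm_add_scaled_sq:
  assumes "f \<in> H" "g \<in> H"
  shows "ip_norm ip (\<lambda>s. f s + t * g s) ^ 2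
    = ip_norm ip f ^ 2 + 2 * Re (cnj t * ip f g) + cmod t ^ 2 * ip_norm ip g ^ 2"
proof -
  have tg: "(\<lambda>s. t * g s) \<in> H" and ftg: "(\<lambda>s. f s + t * g s) \<in> H"
    using assms by (simp_all add: scale_mem combination_mem)
  have "ip (\<lambda>s. f s + t * g s) (\<lambda>s. f s + t * g s)
      = ip f (\<lambda>s. f s + t * g s) + t * ip g (\<lambda>s. f s + t * g s)"
    using ip_add_left[OF assms(1) tg ftg] ip_scale_left[OF assms(2) ftg] by simp
  also have "\<dots> = ip f f + cnj t * ip f g + t * ip g f + (t * cnj t) * ip g g"
    using ip_add_right[OF assms(1) tg] ip_add_right[OF assms(1) tg assms(2)]
      ip_scale_right[OF assms(1,2)] ip_scale_right[OF assms(2,2)] assms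
    by (simp add: algebra_simps)
  finally have "ip (\<lambda>s. f s + t * g s) (\<lambda>s. f s + t * g s)
      = ip f f + cnj t * ip f g + t * ip g f + (t * cnj t) * ip g g" .
  moreover have "Re (t * ip g f) = Re (cnj t * ip f g)"
    using assms by (simp add: ip_cnj_commute[of f g])
  moreover have "(t * cnj t) * ip g g = of_real (cmod t ^ 2 * ip_norm ip g ^ 2)"
    using assms by (simp add: ip_self_of_real flip: complex_norm_square)
  ultimately have "Re (ip (\<lambda>s. f s + t * g s) (\<lambda>s. f s + t * g s))
      = ip_norm ip f ^ 2 + 2 * Re (cnj t * ip f g) + cmod t ^ 2 * ip_norm ip g ^ 2"
    using ip_self_of_real[OF assms(1)] by simp
  then show ?thesis
    using ip_self_of_real[OF ftg] by simp
qed

lemma cauchy_schwarz: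
  assumes "f \<in> H" "g \<in> H"
  shows "cmod (ip f g) \<le> ip_norm ip f * ip_norm ip g"
proof (cases "ip_norm ip g = 0")
  case True
  then show ?thesis
    using assms by (simp add: ip_norm_eq_0_iff ip_zero_right ip_norm_nonneg)
next
  case False
  define z where "z = ip f g"
  define G where "G = ip_norm ip g ^ 2"
  have "G > 0"
    using False ip_norm_nonneg[OF assms(2)] by (simp add: G_def)
  have Re_eq: "Re (cnj (- z / of_real G) * z) = - (cmod z ^ 2 / G)"
    using cmod_power2[of z] by (simp add: power2_eq_square)
  have norm_eq: "cmod (- z / of_real G) ^ 2 * G = cmod z ^ 2 / G"
    using \<open>G > 0\<close> by (simp add: norm_divide power_divide power2_eq_square)
  have "ip_norm ip (\<lambda>s. f s + - z / of_real G * g s) ^ 2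
      = ip_norm ip f ^ 2 + 2 * - (cmod z ^ 2 / G) + cmod z ^ 2 / G"
    using ip_norm_add_scaled_sq[OF assms, of "- z / of_real G", folded z_def G_def]
    unfolding Re_eq norm_eq .
  then have "0 \<le> ip_norm ip f ^ 2 - cmod z ^ 2 / G"
    using zero_le_power2[of "ip_norm ip (\<lambda>s. f s + - z / of_real G * g s)"] by linarith
  then have "cmod z ^ 2 \<le> (ip_norm ip f * ip_norm ip g) ^ 2"
    using \<open>G > 0\<close> by (simp add: G_def power_mult_distrib field_simps)
  then show ?thesis
    unfolding z_def by (rule power2_le_imp_le) (simp add: assms ip_norm_nonneg)
qed

lemma ip_norm_triangle:
  assumes "f \<in> H" "g \<in> H"
  shows "ip_norm ip (\<lambda>s. f s + g s) \<le> ip_norm ip f + ip_norm ip g"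
proof -
  have "ip_norm ip (\<lambda>s. f s + g s) ^ 2 = ip_norm ip f ^ 2 + 2 * Re (ip f g) + ip_norm ip g ^ 2"
    using ip_norm_add_scaled_sq[OF assms, of 1] by simp
  also have "\<dots> \<le> ip_norm ip f ^ 2 + 2 * (ip_norm ip f * ip_norm ip g) + ip_norm ip g ^ 2"
    using cauchy_schwarz[OF assms] complex_Re_le_cmod[of "ip f g"] by simp
  also have "\<dots> = (ip_norm ip f + ip_norm ip g) ^ 2"
    by (simp add: power2_sum)
  finally show ?thesis
    by (rule power2_le_imp_le) (simp add: assms ip_norm_nonneg)
qed

lemma ip_norm_scale: "f \<in> H \<Longrightarrow> ip_norm ip (\<lambda>s. c * f s) = cmod c * ip_norm ip f"
  using ip_norm_add_scaled_sq[OF zero_mem, of f c] ip_norm_eq_0_iff[OF zero_mem]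
  by (simp add: ip_zero_left power_mult_distrib[symmetric] ip_norm_nonneg power2_eq_iff_nonneg
      scale_mem)

lemma ip_norm_diff_commute:
  "f \<in> H \<Longrightarrow> g \<in> H \<Longrightarrow> ip_norm ip (\<lambda>s. f s - g s) = ip_norm ip (\<lambda>s. g s - f s)"
  using ip_norm_scale[OF diff_mem, of f g "-1"] by simp

lemma ip_norm_diff_triangle:
  assumes "u \<in> H" "v \<in> H" "w \<in> H"
  shows "ip_norm ip (\<lambda>s. u s - w s) \<le> ip_norm ip (\<lambda>s. u s - v s) + ip_norm ip (\<lambda>s. v s - w s)"
  using ip_norm_triangle[OF diff_mem[OF assms(1,2)] diff_mem[OF assms(2,3)]] by simp

lemma parallelogram:
  assumes "f \<in> H" "g \<in> H"
  shows "ip_norm ip (\<lambda>s. f s + g s) ^ 2 + ip_norm ip (\<lambda>s. f s - g s) ^ 2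
    = 2 * ip_norm ip f ^ 2 + 2 * ip_norm ip g ^ 2"
  using ip_norm_add_scaled_sq[OF assms, of 1] ip_norm_add_scaled_sq[OF assms, of "-1"] by simp

lemma orthogonal_if_norm_minimal:
  assumes "h \<in> H" "k \<in> H" and minimal: "\<And>t. ip_norm ip h \<le> ip_norm ip (\<lambda>s. h s + t * k s)"
  shows "ip h k = 0"
proof -
  define z where "z = ip h k"
  define \<epsilon> where "\<epsilon> = inverse (ip_norm ip k ^ 2 + 1)"
  have "ip_norm ip k ^ 2 + 1 > 0"
    by (simp add: add_nonneg_pos)
  then have "\<epsilon> > 0" "\<epsilon> * ip_norm ip k ^ 2 \<le> 1"
    by (simp_all add: \<epsilon>_def field_simps)
  \<comment> \<open>With \<epsilon> * ip_norm ip k ^ 2 \<le> 1 the quadratic term of the expansion at t = - \<epsilon> * z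
     is dominated by the linear one.\<close>
  have "ip_norm ip h ^ 2 \<le> ip_norm ip (\<lambda>s. h s + - (of_real \<epsilon> * z) * k s) ^ 2"
    using minimal[of "- (of_real \<epsilon> * z)"] by (rule power_mono) (simp add: assms ip_norm_nonneg)
  also have "\<dots> = ip_norm ip h ^ 2 - 2 * \<epsilon> * cmod z ^ 2 + \<epsilon> ^ 2 * cmod z ^ 2 * ip_norm ip k ^ 2"
  proof -
    have "Re (cnj (- (of_real \<epsilon> * z)) * z) = - (\<epsilon> * cmod z ^ 2)"
      using cmod_power2[of z] by (simp add: power2_eq_square algebra_simps)
    moreover have "cmod (- (of_real \<epsilon> * z)) ^ 2 = \<epsilon> ^ 2 * cmod z ^ 2"
      using \<open>\<epsilon> > 0\<close> by (simp add: norm_mult power_mult_distrib)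
    ultimately show ?thesis
      using ip_norm_add_scaled_sq[OF assms(1,2), of "- (of_real \<epsilon> * z)", folded z_def] by simp
  qed
  also have "\<dots> \<le> ip_norm ip h ^ 2 - \<epsilon> * cmod z ^ 2"
    using mult_left_mono[OF \<open>\<epsilon> * ip_norm ip k ^ 2 \<le> 1\<close>, of "\<epsilon> * cmod z ^ 2"] \<open>\<epsilon> > 0\<close>
    by (simp add: power2_eq_square algebra_simps)
  finally have "cmod z ^ 2 \<le> 0"
    using \<open>\<epsilon> > 0\<close> by (simp add: mult_le_0_iff)
  then show ?thesis
    by (simp add: z_def)
qed

lemma fun_span_subset: "(\<And>i. i \<in> I \<Longrightarrow> K i \<in> H) \<Longrightarrow> fun_span K I \<subseteq> H"
proof
  fix g assume K: "\<And>i. i \<in> I \<Longrightarrow> K i \<in> H" and "g \<in> fun_span K I"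
  then obtain B c where g: "g = (\<lambda>s. \<Sum>i\<in>B. c i * K i s)" and "finite B" "B \<subseteq> I"
    unfolding fun_span_def by blast
  from \<open>finite B\<close> \<open>B \<subseteq> I\<close> show "g \<in> H"
    unfolding g
  proof (induction B rule: finite_induct)
    case empty
    then show ?case by (simp add: zero_mem)
  next
    case (insert i B)
    then show ?case by (simp add: add_mem[OF scale_mem[OF K]])
  qed
qed

lemma parallelogram_midpoint_bound:
  assumes "f \<in> H" "u \<in> H" "v \<in> H" "d \<ge> 0"
    and "d \<le> ip_norm ip (\<lambda>s. f s - ((1/2) * u s + (1/2) * v s))"
  shows "ip_norm ip (\<lambda>s. u s - v s) ^ 2
    \<le> 2 * ip_norm ip (\<lambda>s. f s - u s) ^ 2 + 2 * ip_norm ip (\<lambda>s. f s - v s) ^ 2 - 4 * d ^ 2"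
proof -
  define w where "w = (\<lambda>s. (1/2) * u s + (1/2) * v s)"
  have "w \<in> H"
    unfolding w_def using assms(2,3) by (intro add_mem scale_mem)
  have "(\<lambda>s. (f s - u s) + (f s - v s)) = (\<lambda>s. 2 * (f s - w s))"
    by (simp add: w_def algebra_simps)
  then have "ip_norm ip (\<lambda>s. (f s - u s) + (f s - v s)) ^ 2
      = 4 * ip_norm ip (\<lambda>s. f s - ((1/2) * u s + (1/2) * v s)) ^ 2"
    using ip_norm_scale[OF diff_mem[OF assms(1) \<open>w \<in> H\<close>], of 2]
    by (simp add: w_def power_mult_distrib)
  moreover have "d ^ 2 \<le> ip_norm ip (\<lambda>s. f s - ((1/2) * u s + (1/2) * v s)) ^ 2"
    using assms(4,5) by (rule power_mono[rotated])
  moreover have "ip_norm ip (\<lambda>s. (f s - u s) - (f s - v s)) ^ 2 = ip_norm ip (\<lambda>s. u s - v s) ^ 2"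
    using ip_norm_diff_commute[OF assms(3,2)] by simp
  ultimately show ?thesis
    using parallelogram[OF diff_mem[OF assms(1,2)] diff_mem[OF assms(1,3)]] by linarith
qed

lemma minimizing_sequence_Cauchy:
  assumes f: "f \<in> H" and V: "V \<subseteq> H"
    and midpoint: "\<And>u w. u \<in> V \<Longrightarrow> w \<in> V \<Longrightarrow> (\<lambda>s. (1/2) * u s + (1/2) * w s) \<in> V"
    and lower: "\<And>g. g \<in> V \<Longrightarrow> d \<le> ip_norm ip (\<lambda>s. f s - g s)" and "d \<ge> 0"
    and G: "\<And>n. G n \<in> V" "\<And>n. ip_norm ip (\<lambda>s. f s - G n s) < d + inverse (Suc n)"
  shows "\<forall>\<epsilon>>0. \<exists>N. \<forall>m\<ge>N. \<forall>n\<ge>N. ip_norm ip (\<lambda>s. G m s - G n s) < \<epsilon>"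
proof (intro allI impI)
  fix \<epsilon> :: real assume "\<epsilon> > 0"
  then obtain N where N: "inverse (real (Suc N)) < \<epsilon> ^ 2 / (4 * (2 * d + 1))"
    using reals_Archimedean \<open>d \<ge> 0\<close> by (metis divide_pos_pos mult_pos_pos zero_less_numeral
      zero_less_power add_nonneg_pos zero_less_one mult_nonneg_nonneg zero_le_numeral)
  define \<delta> where "\<delta> = inverse (real (Suc N))"
  have "\<delta> > 0" "\<delta> \<le> 1"
    by (simp_all add: \<delta>_def field_simps)
  have G_sq: "ip_norm ip (\<lambda>s. f s - G k s) ^ 2 \<le> (d + \<delta>) ^ 2" if "k \<ge> N" for k
  proof (rule power_mono)
    have "inverse (real (Suc k)) \<le> \<delta>"
      unfolding \<delta>_def using that by (simp add: field_simps)
    then show "ip_norm ip (\<lambda>s. f s - G k s) \<le> d + \<delta>"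
      using G(2)[of k] by simp
  qed (use G(1) V f in \<open>auto intro: ip_norm_nonneg diff_mem\<close>)
  show "\<exists>N. \<forall>m\<ge>N. \<forall>n\<ge>N. ip_norm ip (\<lambda>s. G m s - G n s) < \<epsilon>"
  proof (intro exI allI impI)
    fix m n assume "m \<ge> N" "n \<ge> N"
    have "ip_norm ip (\<lambda>s. G m s - G n s) ^ 2
        \<le> 2 * ip_norm ip (\<lambda>s. f s - G m s) ^ 2 + 2 * ip_norm ip (\<lambda>s. f s - G n s) ^ 2 - 4 * d ^ 2"
      using G(1) V
      by (intro parallelogram_midpoint_bound[OF f _ _ \<open>d \<ge> 0\<close> lower[OF midpoint[OF G(1) G(1)]]])
        auto
    also have "\<dots> \<le> 4 * ((d + \<delta>) ^ 2 - d ^ 2)"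
      using G_sq[OF \<open>m \<ge> N\<close>] G_sq[OF \<open>n \<ge> N\<close>] by simp
    also have "\<dots> = 4 * \<delta> * (2 * d + \<delta>)"
      by (simp add: power2_eq_square algebra_simps)
    also have "\<dots> \<le> 4 * \<delta> * (2 * d + 1)"
      using \<open>\<delta> > 0\<close> \<open>\<delta> \<le> 1\<close> by simp
    also have "\<dots> < \<epsilon> ^ 2"
      using N \<open>d \<ge> 0\<close> unfolding \<delta>_def by (simp add: field_simps)
    finally show "ip_norm ip (\<lambda>s. G m s - G n s) < \<epsilon>"
      by (rule power_less_imp_less_base) (use \<open>\<epsilon> > 0\<close> in simp)
  qed
qed

lemma best_approximation_in_closure:
  assumes K: "\<And>i. i \<in> I \<Longrightarrow> K i \<in> H" and f: "f \<in> H"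
  shows "\<exists>g\<in>H. (\<forall>e>0. \<exists>w\<in>fun_span K I. ip_norm ip (\<lambda>s. g s - w s) < e)
    \<and> (\<forall>w\<in>fun_span K I. ip_norm ip (\<lambda>s. f s - g s) \<le> ip_norm ip (\<lambda>s. f s - g s - w s))"
proof -
  define V where "V = fun_span K I"
  define D where "D g = ip_norm ip (\<lambda>s. f s - g s)" for g
  define d where "d = Inf (D ` V)"
  have VH: "V \<subseteq> H"
    unfolding V_def by (rule fun_span_subset[OF K])
  have "(\<lambda>_. 0) \<in> V"
    using fun_span_sum_mem[of "{}" I] by (simp add: V_def)
  have "D g \<ge> 0" if "g \<in> V" for g
    using that VH f by (auto simp: D_def intro: ip_norm_nonneg diff_mem)
  then have bdd: "bdd_below (D ` V)"
    by (rule bdd_belowI2)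
  have "d \<ge> 0"
    unfolding d_def using \<open>(\<lambda>_. 0) \<in> V\<close> \<open>\<And>g. g \<in> V \<Longrightarrow> D g \<ge> 0\<close> by (auto intro: cInf_greatest)
  have d_le: "d \<le> D g" if "g \<in> V" for g
    unfolding d_def using bdd that by (simp add: cInf_lower)
  have "\<exists>g\<in>V. D g < d + inverse (Suc n)" for n
    using cInf_less_iff[of "D ` V" "d + inverse (Suc n)"] \<open>(\<lambda>_. 0) \<in> V\<close> bdd
    by (auto simp: d_def)
  then obtain G where G: "\<And>n. G n \<in> V" "\<And>n. D (G n) < d + inverse (Suc n)"
    by metis
  have GH: "G n \<in> H" for n
    using G(1) VH by blast
  have "\<forall>\<epsilon>>0. \<exists>N. \<forall>m\<ge>N. \<forall>n\<ge>N. ip_norm ip (\<lambda>s. G m s - G n s) < \<epsilon>"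
  proof (rule minimizing_sequence_Cauchy[OF f VH _ _ \<open>d \<ge> 0\<close> G(1)])
    show "(\<lambda>s. (1/2) * u s + (1/2) * w s) \<in> V" if "u \<in> V" "w \<in> V" for u w
      using that unfolding V_def by (rule fun_span_combination)
  qed (use d_le G(2) in \<open>simp_all add: D_def\<close>)
  then obtain g where "g \<in> H" and "(\<lambda>n. ip_norm ip (\<lambda>s. G n s - g s)) \<longlonglongrightarrow> 0"
    using complete[of G, OF GH] by blast
  then have r: "(\<lambda>n. ip_norm ip (\<lambda>s. g s - G n s)) \<longlonglongrightarrow> 0"
    using ip_norm_diff_commute[OF GH \<open>g \<in> H\<close>] by simp
  have "D g \<le> d + (inverse (Suc n) + ip_norm ip (\<lambda>s. g s - G n s))" for n
    using ip_norm_diff_triangle[OF f GH \<open>g \<in> H\<close>, of n] G(2)[of n]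
      ip_norm_diff_commute[OF GH \<open>g \<in> H\<close>, of n] by (simp add: D_def)
  then have "D g \<le> d"
    using tendsto_add_zero[OF LIMSEQ_inverse_real_of_nat r] by (rule le_if_le_add_tendsto_0)
  moreover have "d \<le> ip_norm ip (\<lambda>s. f s - g s - w s)" if "w \<in> V" for w
  proof (rule le_if_le_add_tendsto_0[OF _ r])
    fix n
    have "(\<lambda>s. 1 * G n s + 1 * w s) \<in> V"
      using G(1)[of n] that unfolding V_def by (rule fun_span_combination)
    then have "d \<le> D (\<lambda>s. G n s + w s)"
      using d_le by simp
    also have "\<dots> \<le> ip_norm ip (\<lambda>s. f s - (g s + w s))
        + ip_norm ip (\<lambda>s. (g s + w s) - (G n s + w s))"
      unfolding D_def using f \<open>g \<in> H\<close> GH that VH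
      by (intro ip_norm_diff_triangle) (auto intro: add_mem)
    finally show "d \<le> ip_norm ip (\<lambda>s. f s - g s - w s) + ip_norm ip (\<lambda>s. g s - G n s)"
      by (simp add: algebra_simps)
  qed
  moreover have "\<exists>w\<in>V. ip_norm ip (\<lambda>s. g s - w s) < e" if "e > 0" for e
    using eventually_happens[OF order_tendstoD(2)[OF r that]] G(1) by auto
  ultimately show ?thesis
    using \<open>g \<in> H\<close> unfolding D_def V_def by (meson order.trans)
qed

lemma orthogonal_decomposition:
  assumes K: "\<And>i. i \<in> I \<Longrightarrow> K i \<in> H" and f: "f \<in> H"
  shows "\<exists>h\<in>H. (\<forall>i\<in>I. ip h (K i) = 0)
    \<and> (\<forall>e>0. \<exists>g\<in>fun_span K I. ip_norm ip (\<lambda>s. f s - h s - g s) < e)"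
proof -
  have "\<exists>g\<in>H. (\<forall>e>0. \<exists>w\<in>fun_span K I. ip_norm ip (\<lambda>s. g s - w s) < e)
    \<and> (\<forall>w\<in>fun_span K I. ip_norm ip (\<lambda>s. f s - g s) \<le> ip_norm ip (\<lambda>s. f s - g s - w s))"
    using K f by (rule best_approximation_in_closure)
  then obtain g where "g \<in> H" and approx: "\<forall>e>0. \<exists>w\<in>fun_span K I. ip_norm ip (\<lambda>s. g s - w s) < e"
    and best: "\<forall>w\<in>fun_span K I. ip_norm ip (\<lambda>s. f s - g s) \<le> ip_norm ip (\<lambda>s. f s - g s - w s)"
    by blast
  define h where "h = (\<lambda>s. f s - g s)"
  have "h \<in> H"
    unfolding h_def using f \<open>g \<in> H\<close> by (rule diff_mem)
  have "ip h (K i) = 0" if "i \<in> I" for i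
  proof (rule orthogonal_if_norm_minimal[OF \<open>h \<in> H\<close> K[OF that]])
    fix t
    have "(\<lambda>s. (- t) * K i s) \<in> fun_span K I"
      using fun_span_sum_mem[of "{i}" I "\<lambda>_. - t" K] that by simp
    then have "ip_norm ip (\<lambda>s. f s - g s) \<le> ip_norm ip (\<lambda>s. f s - g s - (- t) * K i s)"
      by (rule best[rule_format])
    then show "ip_norm ip h \<le> ip_norm ip (\<lambda>s. h s + t * K i s)"
      by (simp add: h_def)
  qed
  moreover have "\<forall>e>0. \<exists>w\<in>fun_span K I. ip_norm ip (\<lambda>s. f s - h s - w s) < e"
    using approx by (simp add: h_def)
  ultimately show ?thesis
    using \<open>h \<in> H\<close> by blast
qed

end

section \<open>Holomorphy and totality\<close>

lemma open_halfplane: "open (halfplane \<rho>)"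
  unfolding halfplane_def by (rule open_halfspace_Re_gt)

lemma connected_halfplane: "connected (halfplane \<rho>)"
  unfolding halfplane_def by (rule connected_halfspace_Re_gt)

lemma halfplane_cball:
  assumes "x \<in> halfplane \<rho>"
  obtains d \<sigma> where "d > 0" "\<sigma> > \<rho>" "cball x d \<subseteq> halfplane \<rho>" "\<And>z. z \<in> cball x d \<Longrightarrow> \<sigma> \<le> Re z"
proof
  define d where "d = (Re x - \<rho>) / 2"
  show "d > 0" "\<rho> + d > \<rho>"
    using assms by (simp_all add: d_def halfplane_def)
  show Re_ge: "\<rho> + d \<le> Re z" if "z \<in> cball x d" for z
  proof -
    have "Re x - Re z \<le> cmod (x - z)"
      using abs_Re_le_cmod[of "x - z"] by simp
    then show ?thesis
      using that by (simp add: d_def dist_norm field_simps)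
  qed
  show "cball x d \<subseteq> halfplane \<rho>"
    using Re_ge \<open>d > 0\<close> by (force simp: halfplane_def)
qed

lemma dkernel_holomorphic:
  assumes nonneg: "\<forall>n\<ge>1. a n \<ge> 0" and conv: "kernel_converges \<rho> a" and t: "t \<in> halfplane \<rho>"
  shows "(\<lambda>s. dkernel a s t) holomorphic_on halfplane \<rho>"
proof -
  define T where "T n s = of_real (a (Suc n)) * of_nat (Suc n) powr -(s + cnj t)" for n s
  show ?thesis
  proof (rule holomorphic_uniform_sequence[where f = "\<lambda>N s. \<Sum>n<N. T n s"])
    show "(\<lambda>s. \<Sum>n<N. T n s) holomorphic_on halfplane \<rho>" for N
      unfolding T_def by (intro holomorphic_intros)
    fix x assume "x \<in> halfplane \<rho>"
    then obtain d \<sigma> where "d > 0" "\<sigma> > \<rho>" "cball x d \<subseteq> halfplane \<rho>"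
      and Re_ge: "\<And>z. z \<in> cball x d \<Longrightarrow> \<sigma> \<le> Re z"
      using halfplane_cball by blast
    have "uniform_limit (cball x d) (\<lambda>N s. \<Sum>n<N. T n s) (\<lambda>s. \<Sum>n. T n s) sequentially"
    proof (rule Weierstrass_m_test)
      show "summable (\<lambda>n. a (Suc n) * real (Suc n) powr -(\<sigma> + Re t))"
        using t \<open>\<sigma> > \<rho>\<close> by (intro kernel_real_summable[OF conv]) (simp_all add: halfplane_def)
      fix n z assume "z \<in> cball x d"
      have "norm (T n z) = a (Suc n) * real (Suc n) powr -(Re z + Re t)"
        using nonneg
        by (simp only: T_def norm_mult norm_of_nat_powr_kernel_exponent zero_less_Suc) simp
      also have "\<dots> \<le> a (Suc n) * real (Suc n) powr -(\<sigma> + Re t)"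
        using nonneg Re_ge[OF \<open>z \<in> cball x d\<close>] by (intro mult_left_mono powr_mono) auto
      finally show "norm (T n z) \<le> a (Suc n) * real (Suc n) powr -(\<sigma> + Re t)" .
    qed
    then show "\<exists>d>0. cball x d \<subseteq> halfplane \<rho> \<and>
        uniform_limit (cball x d) (\<lambda>N s. \<Sum>n<N. T n s) (\<lambda>s. dkernel a s t) sequentially"
      using \<open>d > 0\<close> \<open>cball x d \<subseteq> halfplane \<rho>\<close> by (auto simp: dkernel_def T_def)
  qed (rule open_halfplane)
qed

lemma kfun_holomorphic:
  assumes "\<forall>n\<ge>1. a n \<ge> 0" "kernel_converges \<rho> a" "t \<in> halfplane \<rho>"
  shows "kfun \<rho> a t holomorphic_on halfplane \<rho>"
  by (rule holomorphic_transform[OF dkernel_holomorphic[OF assms]]) (simp add: kfun_def)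

lemma Re_dkernel_diag_le:
  assumes nonneg: "\<forall>n\<ge>1. a n \<ge> 0" and conv: "kernel_converges \<rho> a"
    and "\<sigma> > \<rho>" "\<sigma> \<le> Re s"
  shows "Re (dkernel a s s) \<le> (\<Sum>n. a (Suc n) * real (Suc n) powr -(\<sigma> + \<sigma>))"
proof -
  have "\<rho> < Re s"
    using assms(3,4) by simp
  have "dkernel a s s = (\<Sum>n. of_real (a (Suc n) * real (Suc n) powr -(Re s + Re s)))"
    unfolding dkernel_def of_nat_powr_kernel_exponent by (simp del: of_nat_Suc)
  also have "\<dots> = of_real (\<Sum>n. a (Suc n) * real (Suc n) powr -(Re s + Re s))"
    by (rule suminf_of_real[symmetric, OF kernel_real_summable[OF conv \<open>\<rho> < Re s\<close> \<open>\<rho> < Re s\<close>]])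
  finally have "Re (dkernel a s s) = (\<Sum>n. a (Suc n) * real (Suc n) powr -(Re s + Re s))"
    by simp
  also have "\<dots> \<le> (\<Sum>n. a (Suc n) * real (Suc n) powr -(\<sigma> + \<sigma>))"
    using nonneg assms(4)
    by (intro suminf_le kernel_real_summable[OF conv] mult_left_mono powr_mono)
      (auto simp: \<open>\<rho> < Re s\<close> assms(3))
  finally show ?thesis .
qed

lemma holomorphic_vanishing_on_vertical_line:
  assumes "h holomorphic_on halfplane \<rho>" "\<alpha> > \<rho>" and zero: "\<And>b. h (Complex \<alpha> b) = 0"
    and "z \<in> halfplane \<rho>"
  shows "h z = 0"
proof (rule analytic_continuation[OF assms(1) open_halfplane connected_halfplane])
  show "range (Complex \<alpha>) \<subseteq> halfplane \<rho>" "Complex \<alpha> 0 \<in> halfplane \<rho>"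
    using \<open>\<alpha> > \<rho>\<close> by (auto simp: halfplane_def)
  show "Complex \<alpha> 0 islimpt range (Complex \<alpha>)"
  proof (rule islimptI)
    fix T assume "Complex \<alpha> 0 \<in> T" "open T"
    then obtain \<epsilon> where "\<epsilon> > 0" "ball (Complex \<alpha> 0) \<epsilon> \<subseteq> T"
      by (auto simp: open_contains_ball)
    moreover have "Complex \<alpha> (\<epsilon> / 2) - Complex \<alpha> 0 = Complex 0 (\<epsilon> / 2)"
      by (simp add: complex_eq_iff)
    then have "dist (Complex \<alpha> (\<epsilon> / 2)) (Complex \<alpha> 0) < \<epsilon>"
      using \<open>\<epsilon> > 0\<close> by (simp add: dist_norm cmod_def)
    ultimately show "\<exists>y\<in>range (Complex \<alpha>). y \<in> T \<and> y \<noteq> Complex \<alpha> 0"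
      by (intro bexI[of _ "Complex \<alpha> (\<epsilon> / 2)"]) (auto simp: dist_commute)
  qed
qed (use zero assms(4) in auto)

locale dirichlet_rkhs = hilbert_fun \<rho> H ip
  for \<rho> :: real and H :: "(complex \<Rightarrow> complex) set"
    and ip :: "(complex \<Rightarrow> complex) \<Rightarrow> (complex \<Rightarrow> complex) \<Rightarrow> complex" +
  fixes a :: "nat \<Rightarrow> real"
  assumes rkhs: "is_rkhs \<rho> a H ip" and nonneg: "\<forall>n\<ge>1. a n \<ge> 0" and conv: "kernel_converges \<rho> a"
begin

lemma kernel_mem: "t \<in> halfplane \<rho> \<Longrightarrow> kfun \<rho> a t \<in> H"
  and reproducing: "t \<in> halfplane \<rho> \<Longrightarrow> f \<in> H \<Longrightarrow> ip f (kfun \<rho> a t) = f t"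
  using rkhs unfolding is_rkhs_def by blast+

lemma ip_norm_kernel_le:
  assumes "\<sigma> > \<rho>" "\<sigma> \<le> Re t"
  shows "ip_norm ip (kfun \<rho> a t) \<le> sqrt (\<Sum>n. a (Suc n) * real (Suc n) powr -(\<sigma> + \<sigma>))"
proof -
  have "t \<in> halfplane \<rho>"
    using assms by (simp add: halfplane_def)
  moreover have "kfun \<rho> a t t = dkernel a t t"
    using \<open>t \<in> halfplane \<rho>\<close> by (simp add: kfun_def)
  ultimately have "ip (kfun \<rho> a t) (kfun \<rho> a t) = dkernel a t t"
    using reproducing[OF _ kernel_mem] by simp
  then have "ip_norm ip (kfun \<rho> a t) = sqrt (Re (dkernel a t t))"
    by (simp add: ip_norm_def)
  also have "\<dots> \<le> sqrt (\<Sum>n. a (Suc n) * real (Suc n) powr -(\<sigma> + \<sigma>))"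
    using Re_dkernel_diag_le[OF nonneg conv assms] by simp
  finally show ?thesis .
qed

lemma uniform_limit_if_ip_norm_tendsto:
  assumes F: "\<And>n. F n \<in> H" and f: "f \<in> H"
    and lim: "(\<lambda>n. ip_norm ip (\<lambda>s. F n s - f s)) \<longlonglongrightarrow> 0"
    and "\<sigma> > \<rho>" and Re_ge: "\<And>z. z \<in> S \<Longrightarrow> \<sigma> \<le> Re z"
  shows "uniform_limit S F f sequentially"
proof (rule uniform_limitI)
  fix \<epsilon> :: real assume "\<epsilon> > 0"
  define M where "M = sqrt (\<Sum>n. a (Suc n) * real (Suc n) powr -(\<sigma> + \<sigma>))"
  have "of_real \<sigma> \<in> halfplane \<rho>"
    using \<open>\<sigma> > \<rho>\<close> by (simp add: halfplane_def)
  then have "0 \<le> ip_norm ip (kfun \<rho> a (of_real \<sigma>))"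
    by (intro ip_norm_nonneg kernel_mem)
  also have "\<dots> \<le> M"
    unfolding M_def using \<open>\<sigma> > \<rho>\<close> by (intro ip_norm_kernel_le) simp_all
  finally have "M \<ge> 0" .
  have dist_le: "dist (F n z) (f z) \<le> ip_norm ip (\<lambda>s. F n s - f s) * M" if "z \<in> S" for n z
  proof -
    have "\<sigma> \<le> Re z" "z \<in> halfplane \<rho>"
      using Re_ge[OF that] \<open>\<sigma> > \<rho>\<close> by (simp_all add: halfplane_def)
    then have "dist (F n z) (f z) = cmod (ip (\<lambda>s. F n s - f s) (kfun \<rho> a z))"
      by (simp add: reproducing diff_mem[OF F f] dist_norm)
    also have "\<dots> \<le> ip_norm ip (\<lambda>s. F n s - f s) * ip_norm ip (kfun \<rho> a z)"
      by (rule cauchy_schwarz[OF diff_mem[OF F f] kernel_mem[OF \<open>z \<in> halfplane \<rho>\<close>]])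
    also have "\<dots> \<le> ip_norm ip (\<lambda>s. F n s - f s) * M"
      unfolding M_def using ip_norm_kernel_le[OF \<open>\<sigma> > \<rho>\<close> \<open>\<sigma> \<le> Re z\<close>]
      by (intro mult_left_mono ip_norm_nonneg diff_mem F f)
    finally show ?thesis .
  qed
  have "\<forall>\<^sub>F n in sequentially. ip_norm ip (\<lambda>s. F n s - f s) < \<epsilon> / (M + 1)"
    using order_tendstoD(2)[OF lim] \<open>\<epsilon> > 0\<close> \<open>M \<ge> 0\<close> by simp
  then show "\<forall>\<^sub>F n in sequentially. \<forall>z\<in>S. dist (F n z) (f z) < \<epsilon>"
  proof (rule eventually_mono, intro ballI)
    fix n z assume "ip_norm ip (\<lambda>s. F n s - f s) < \<epsilon> / (M + 1)" "z \<in> S"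
    then have "ip_norm ip (\<lambda>s. F n s - f s) * M \<le> \<epsilon> / (M + 1) * M"
      using \<open>M \<ge> 0\<close> by (intro mult_right_mono) auto
    also have "\<dots> < \<epsilon>"
      using \<open>M \<ge> 0\<close> \<open>\<epsilon> > 0\<close> by (simp add: field_simps)
    finally show "dist (F n z) (f z) < \<epsilon>"
      using dist_le[OF \<open>z \<in> S\<close>, of n] by linarith
  qed
qed

lemma kernel_span_dense:
  assumes "f \<in> H" "e > 0"
  shows "\<exists>g\<in>fun_span (kfun \<rho> a) (halfplane \<rho>). ip_norm ip (\<lambda>s. f s - g s) < e"
proof -
  have "\<exists>h\<in>H. (\<forall>t\<in>halfplane \<rho>. ip h (kfun \<rho> a t) = 0)
      \<and> (\<forall>e>0. \<exists>g\<in>fun_span (kfun \<rho> a) (halfplane \<rho>). ip_norm ip (\<lambda>s. f s - h s - g s) < e)"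
    using kernel_mem \<open>f \<in> H\<close> by (rule orthogonal_decomposition)
  then obtain h where "h \<in> H" and orth: "\<And>t. t \<in> halfplane \<rho> \<Longrightarrow> ip h (kfun \<rho> a t) = 0"
    and approx: "\<exists>g\<in>fun_span (kfun \<rho> a) (halfplane \<rho>). ip_norm ip (\<lambda>s. f s - h s - g s) < e"
    using \<open>e > 0\<close> by blast
  have "h t = 0" for t
  proof (cases "t \<in> halfplane \<rho>")
    case True
    then show ?thesis
      using orth[OF True] reproducing[OF True \<open>h \<in> H\<close>] by simp
  next
    case False
    then show ?thesis
      by (rule vanishes_outside[OF \<open>h \<in> H\<close>])
  qed
  then show ?thesis
    using approx by simp
qed

lemma holomorphic_mem:
  assumes "f \<in> H"
  shows "f holomorphic_on halfplane \<rho>"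
proof -
  have "\<forall>n. \<exists>g. g \<in> fun_span (kfun \<rho> a) (halfplane \<rho>)
      \<and> ip_norm ip (\<lambda>s. f s - g s) < inverse (Suc n)"
  proof
    fix n
    show "\<exists>g. g \<in> fun_span (kfun \<rho> a) (halfplane \<rho>) \<and> ip_norm ip (\<lambda>s. f s - g s) < inverse (Suc n)"
      using kernel_span_dense[OF assms, of "inverse (Suc n)"] by auto
  qed
  from choice[OF this] obtain F where F: "\<And>n. F n \<in> fun_span (kfun \<rho> a) (halfplane \<rho>)"
    and close: "\<And>n. ip_norm ip (\<lambda>s. f s - F n s) < inverse (Suc n)"
    by blast
  have FH: "F n \<in> H" for n
    using F fun_span_subset[of "halfplane \<rho>" "kfun \<rho> a"] kernel_mem by blast
  have holo: "F n holomorphic_on halfplane \<rho>" for n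
  proof -
    obtain B c where "F n = (\<lambda>s. \<Sum>t\<in>B. c t * kfun \<rho> a t s)" "B \<subseteq> halfplane \<rho>"
      using F[of n] unfolding fun_span_def by blast
    then show ?thesis
      using kfun_holomorphic[OF nonneg conv] by (auto intro!: holomorphic_intros)
  qed
  have lim: "(\<lambda>n. ip_norm ip (\<lambda>s. F n s - f s)) \<longlonglongrightarrow> 0"
  proof (rule tendsto_sandwich[OF _ _ tendsto_const LIMSEQ_inverse_real_of_nat])
    show "\<forall>\<^sub>F n in sequentially. 0 \<le> ip_norm ip (\<lambda>s. F n s - f s)"
      using FH assms by (simp add: ip_norm_nonneg diff_mem)
    show "\<forall>\<^sub>F n in sequentially. ip_norm ip (\<lambda>s. F n s - f s) \<le> inverse (Suc n)"
      using close FH assms ip_norm_diff_commute by (simp add: less_imp_le)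
  qed
  show ?thesis
  proof (rule holomorphic_uniform_sequence[OF open_halfplane holo])
    fix x assume "x \<in> halfplane \<rho>"
    then obtain d \<sigma> where "d > 0" "\<sigma> > \<rho>" "cball x d \<subseteq> halfplane \<rho>"
      and "\<And>z. z \<in> cball x d \<Longrightarrow> \<sigma> \<le> Re z"
      using halfplane_cball by blast
    then show "\<exists>d>0. cball x d \<subseteq> halfplane \<rho> \<and> uniform_limit (cball x d) F f sequentially"
      using uniform_limit_if_ip_norm_tendsto[OF FH assms lim] by blast
  qed
qed

lemma kernels_on_vertical_line_total:
  assumes "\<alpha> > \<rho>" "f \<in> H" "e > 0"
  shows "\<exists>B c. finite B \<and> ip_norm ip (\<lambda>s. f s - (\<Sum>b\<in>B. c b * kfun \<rho> a (Complex \<alpha> b) s)) < e"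
proof -
  have line: "Complex \<alpha> b \<in> halfplane \<rho>" for b
    using assms(1) by (simp add: halfplane_def)
  have "\<exists>h\<in>H. (\<forall>b\<in>UNIV. ip h (kfun \<rho> a (Complex \<alpha> b)) = 0)
      \<and> (\<forall>e>0. \<exists>g\<in>fun_span (\<lambda>b. kfun \<rho> a (Complex \<alpha> b)) UNIV.
                 ip_norm ip (\<lambda>s. f s - h s - g s) < e)"
    by (rule orthogonal_decomposition) (simp_all add: kernel_mem line \<open>f \<in> H\<close>)
  then obtain h where "h \<in> H" and orth: "\<And>b. ip h (kfun \<rho> a (Complex \<alpha> b)) = 0"
    and approx: "\<exists>g\<in>fun_span (\<lambda>b. kfun \<rho> a (Complex \<alpha> b)) UNIV.
                   ip_norm ip (\<lambda>s. f s - h s - g s) < e"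
    using \<open>e > 0\<close> by blast
  have "h (Complex \<alpha> b) = 0" for b
    using orth[of b] reproducing[OF line \<open>h \<in> H\<close>] by simp
  then have "h z = 0" for z
    using holomorphic_vanishing_on_vertical_line[OF holomorphic_mem[OF \<open>h \<in> H\<close>] assms(1)]
      vanishes_outside[OF \<open>h \<in> H\<close>]
    by (cases "z \<in> halfplane \<rho>") auto
  then show ?thesis
    using approx by (auto simp: fun_span_def)
qed

end

theorem corollary5p6:
  fixes \<rho> :: real and a :: "nat \<Rightarrow> real"
    and H :: "(complex \<Rightarrow> complex) set"
    and ip :: "(complex \<Rightarrow> complex) \<Rightarrow> (complex \<Rightarrow> complex) \<Rightarrow> complex"
  assumes nonneg: "\<forall>n\<ge>1. a n \<ge> 0"
    and adm: "admissible a"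
    and conv: "kernel_converges \<rho> a"
    and rkhs: "is_rkhs \<rho> a H ip"
    and alpha: "\<alpha> > \<rho>"
  shows "(\<forall>B c. finite B \<longrightarrow>
            (\<lambda>s. \<Sum>b\<in>B. c b * kfun \<rho> a (Complex \<alpha> b) s) = (\<lambda>_. 0) \<longrightarrow>
            (\<forall>b\<in>B. c b = 0))
       \<and> (\<forall>f\<in>H. \<forall>e>0. \<exists>B c. finite B \<and>
            ip_norm ip (\<lambda>s. f s - (\<Sum>b\<in>B. c b * kfun \<rho> a (Complex \<alpha> b) s)) < e)"
proof -
  interpret dirichlet_rkhs \<rho> H ip a
    using rkhs nonneg conv by unfold_locales (simp_all add: is_rkhs_def)
  show ?thesis
    using kernels_on_vertical_line_linearly_independent[OF nonneg adm conv alpha]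
      kernels_on_vertical_line_total[OF alpha] by blast
qed

end
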